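(* Let $\Omega\subset\mathbb{R}^N$ be a domain satisfying condition $(\mathrm{L}_r)$ for some $r>0$. Then $\Omega$ satisfies condition $(\mathrm{S}_r)$ (with the same $r$).
   Context: A domain is an open connected set; balls are open Euclidean balls. $C^1$ regularity of $\partial\Omega$: for every $x_0\in\partial\Omega$ there exist $\rho,h>0$, a rigid map $T(x)=Ax+c$ ($A\in SO(N)$) with $T(x_0)=0$, and a $C^1$ function $\phi:\bar B_\rho(0)\subset\mathbb{R}^{N-1}\to(-h,h)$, $\phi(0)=0$, $\nabla\phi(0)=0$, such that for $\mathcal{C}=B_\rho(0)\times(-h,h)$: $\mathcal{C}\cap T(\Omega)=\{(x',x_N)\in\mathcal{C}:x_N<\phi(x')\}$ and $\mathcal{C}\cap T(\partial\Omega)=\{(x',x_N)\in\mathcal{C}:x_N=\phi(x')\}$; then the outward unit normal $\vec n$ is well defined on $\partial\Omega$. Condition $(\mathrm{L}_r)$: $\partial\Omega$ is $C^1$ regular and $|\vec n(x_0)-\vec n(y_0)|\le\frac1r|x_0-y_0|$ for all $x_0,y_0\in\partial\Omega$. Condition $(\mathrm{S}_r)$: for every $x_0\in\partial\Omega$ there exist $a,b\in\mathbb{R}^N$ with $B_r(a)\subset\Omega$, $B_r(b)\subset\mathbb{R}^N\setminus\bar\Omega$ and $|x_0-a|=|x_0-b|=r$. *)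

theory Defs
  imports "HOL-Analysis.Analysis"
begin

text \<open>Euclidean space R^N is rendered as real^n, with 'n a finite linearly ordered
  index type; the "last" coordinate x_N is the coordinate at the maximal index.
  A point x' of R^(N-1) is represented by a vector of real^n whose last coordinate is 0.\<close>

definition lastidx :: "'n::{finite,linorder}" where
  "lastidx = Max UNIV"

definition hproj :: "real^('n::{finite,linorder}) \<Rightarrow> real^('n::{finite,linorder})" where
  "hproj x = (\<chi> i. if i = lastidx then 0 else x $ i)"

definition hdisc :: "real \<Rightarrow> (real^('n::{finite,linorder})) set" where
  "hdisc \<rho> = {y. y $ lastidx = 0 \<and> norm y \<le> \<rho>}"

definition cyl :: "real \<Rightarrow> real \<Rightarrow> (real^('n::{finite,linorder})) set" where
  "cyl \<rho> h = {x. norm (hproj x) < \<rho> \<and> \<bar>x $ lastidx\<bar> < h}"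

definition is_chart ::
  "(real^('n::{finite,linorder})) set \<Rightarrow> real^('n::{finite,linorder}) \<Rightarrow> real \<Rightarrow> real \<Rightarrow> real^('n::{finite,linorder})^('n::{finite,linorder}) \<Rightarrow> real^('n::{finite,linorder})
     \<Rightarrow> (real^('n::{finite,linorder}) \<Rightarrow> real) \<Rightarrow> bool" where
  "is_chart \<Omega> x0 \<rho> h A c \<phi> \<longleftrightarrow>
     \<rho> > 0 \<and> h > 0 \<and> orthogonal_matrix A \<and> det A = 1 \<and> A *v x0 + c = 0 \<and>
     (\<forall>y\<in>hdisc \<rho>. \<bar>\<phi> y\<bar> < h) \<and> \<phi> 0 = 0 \<and>
     (\<exists>\<phi>'. (\<forall>y\<in>hdisc \<rho>. (\<phi> has_derivative \<phi>' y) (at y within hdisc \<rho>)) \<and>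
           (\<forall>v. v $ lastidx = 0 \<longrightarrow> continuous_on (hdisc \<rho>) (\<lambda>y. \<phi>' y v)) \<and>
           (\<forall>v. v $ lastidx = 0 \<longrightarrow> \<phi>' 0 v = 0)) \<and>
     cyl \<rho> h \<inter> (\<lambda>x. A *v x + c) ` \<Omega> = {x \<in> cyl \<rho> h. x $ lastidx < \<phi> (hproj x)} \<and>
     cyl \<rho> h \<inter> (\<lambda>x. A *v x + c) ` frontier \<Omega> = {x \<in> cyl \<rho> h. x $ lastidx = \<phi> (hproj x)}"

definition C1_boundary :: "(real^('n::{finite,linorder})) set \<Rightarrow> bool" where
  "C1_boundary \<Omega> \<longleftrightarrow> (\<forall>x0\<in>frontier \<Omega>. \<exists>\<rho> h A c \<phi>. is_chart \<Omega> x0 \<rho> h A c \<phi>)"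

definition outward_normal :: "(real^('n::{finite,linorder})) set \<Rightarrow> real^('n::{finite,linorder}) \<Rightarrow> real^('n::{finite,linorder})" where
  "outward_normal \<Omega> x0 =
     (SOME \<nu>. \<exists>\<rho> h A c \<phi>. is_chart \<Omega> x0 \<rho> h A c \<phi> \<and> \<nu> = transpose A *v axis lastidx 1)"

definition cond_L :: "real \<Rightarrow> (real^('n::{finite,linorder})) set \<Rightarrow> bool" where
  "cond_L r \<Omega> \<longleftrightarrow> C1_boundary \<Omega> \<and>
     (\<forall>x0\<in>frontier \<Omega>. \<forall>y0\<in>frontier \<Omega>.
        norm (outward_normal \<Omega> x0 - outward_normal \<Omega> y0) \<le> (1 / r) * dist x0 y0)"

definition cond_S :: "real \<Rightarrow> (real^('n::{finite,linorder})) set \<Rightarrow> bool" where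
  "cond_S r \<Omega> \<longleftrightarrow> (\<forall>x0\<in>frontier \<Omega>. \<exists>a b.
     ball a r \<subseteq> \<Omega> \<and> ball b r \<subseteq> - closure \<Omega> \<and> dist x0 a = r \<and> dist x0 b = r)"

end

theory Submission
  imports Defs
begin

text \<open>In a chart at a boundary point x0, the slope of the graph above z' can be read off from
  the outward normal at the boundary point above z'. The Lipschitz bound on the normal therefore
  gives |D\<phi>(z')| \<le> |z'|/r' for every r' < r near 0, and integrating along rays
  |\<phi>(z')| \<le> |z'|^2/(2r'): near x0 the boundary avoids both balls of radius r' tangent to it at x0.
  If such a ball met the boundary elsewhere, shrinking it to the smallest tangent ball at x0
  that still touches the boundary gives a touching point y \<noteq> x0 and a radius t \<le> r'; at y the
  normal is radial, so |n(y) - n(x0)| = |y - x0|/t > |y - x0|/r, contradicting the Lipschitz bound.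
  So all these balls avoid the boundary, hence lie in \<Omega> resp. outside its closure, and so do
  their union, the tangent balls of radius r.\<close>

lemma DERIV_abs_diff_le_comparison:
  fixes f g f' g' :: "real \<Rightarrow> real"
  assumes "a \<le> b" and "continuous_on {a..b} f" and "continuous_on {a..b} g"
    and "\<And>s. a < s \<Longrightarrow> s < b \<Longrightarrow> (f has_real_derivative f' s) (at s)"
    and "\<And>s. a < s \<Longrightarrow> s < b \<Longrightarrow> (g has_real_derivative g' s) (at s)"
    and "\<And>s. a < s \<Longrightarrow> s < b \<Longrightarrow> \<bar>g' s\<bar> \<le> f' s"
  shows "\<bar>g b - g a\<bar> \<le> f b - f a"
proof -
  have "(\<lambda>s. f s + g s) a \<le> (\<lambda>s. f s + g s) b"
  proof (rule DERIV_nonneg_imp_increasing_open[OF assms(1)])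
    fix s assume s: "a < s" "s < b"
    have "0 \<le> f' s + g' s" using assms(6)[OF s] by linarith
    then show "\<exists>D. ((\<lambda>s. f s + g s) has_real_derivative D) (at s) \<and> 0 \<le> D"
      using DERIV_add[OF assms(4,5)[OF s]] by blast
  qed (intro continuous_on_add assms(2,3))
  moreover have "(\<lambda>s. f s - g s) a \<le> (\<lambda>s. f s - g s) b"
  proof (rule DERIV_nonneg_imp_increasing_open[OF assms(1)])
    fix s assume s: "a < s" "s < b"
    have "0 \<le> f' s - g' s" using assms(6)[OF s] by linarith
    then show "\<exists>D. ((\<lambda>s. f s - g s) has_real_derivative D) (at s) \<and> 0 \<le> D"
      using DERIV_diff[OF assms(4,5)[OF s]] by blast
  qed (intro continuous_on_diff assms(2,3))
  ultimately show ?thesis by simp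
qed

lemma has_real_derivative_along_line:
  fixes \<phi> :: "'a::real_normed_vector \<Rightarrow> real"
  assumes "(\<phi> has_derivative L) (at (z + s *\<^sub>R w) within D)"
    and "\<And>u. u \<in> I \<Longrightarrow> z + u *\<^sub>R w \<in> D"
  shows "((\<lambda>u. \<phi> (z + u *\<^sub>R w)) has_real_derivative L w) (at s within I)"
proof -
  have line: "((\<lambda>u. z + u *\<^sub>R w) has_derivative (\<lambda>u. u *\<^sub>R w)) (at s within I)"
    by (auto intro!: derivative_eq_intros)
  have "(\<phi> has_derivative L) (at (z + s *\<^sub>R w) within (\<lambda>u. z + u *\<^sub>R w) ` I)"
    using assms by (auto intro: has_derivative_subset)
  from diff_chain_within[OF line this]
  have "((\<lambda>u. \<phi> (z + u *\<^sub>R w)) has_derivative (\<lambda>u. L (u *\<^sub>R w))) (at s within I)"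
    by (simp add: o_def)
  moreover have "L (u *\<^sub>R w) = L w * u" for u
    using linear_scale[OF has_derivative_linear[OF assms(1)]] by simp
  ultimately show ?thesis by (simp add: has_field_derivative_def)
qed

lemma tendsto_directional_quotient:
  fixes \<phi> :: "'a::real_normed_vector \<Rightarrow> real"
  assumes "(\<phi> has_derivative L) (at z within D)" and "b > 0"
    and "\<And>u. 0 \<le> u \<Longrightarrow> u \<le> b \<Longrightarrow> z + u *\<^sub>R w \<in> D"
  shows "((\<lambda>s. (\<phi> (z + s *\<^sub>R w) - \<phi> z) / s) \<longlongrightarrow> L w) (at_right 0)"
proof -
  have "((\<lambda>u. \<phi> (z + u *\<^sub>R w)) has_real_derivative L w) (at 0 within {0..b})"
    by (rule has_real_derivative_along_line) (use assms in auto)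
  then show ?thesis
    unfolding has_field_derivative_iff at_within_Icc_at_right[OF \<open>b > 0\<close>] by simp
qed

lemma dist_tangent_center_power2:
  fixes x0 y m :: "'a::real_inner"
  assumes "norm m = 1"
  shows "(dist y (x0 - t *\<^sub>R m))\<^sup>2 = (norm (y - x0))\<^sup>2 - 2 * t * ((x0 - y) \<bullet> m) + t\<^sup>2"
proof -
  define q where "q = y - x0"
  have "dist y (x0 - t *\<^sub>R m) = norm (q + t *\<^sub>R m)"
    unfolding q_def by (simp add: dist_norm algebra_simps)
  then have "(dist y (x0 - t *\<^sub>R m))\<^sup>2 = q \<bullet> q + 2 * t * (q \<bullet> m) + t\<^sup>2 * (m \<bullet> m)"
    by (simp only: power2_norm_eq_inner) (simp add: inner_add_left inner_add_right inner_commute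
        algebra_simps power2_eq_square)
  moreover have "m \<bullet> m = 1" using assms by (simp add: norm_eq_1)
  ultimately show ?thesis
    unfolding q_def by (simp add: power2_norm_eq_inner[symmetric] inner_diff_left algebra_simps)
qed

lemma mem_ball_tangent_iff:
  fixes x0 y m :: "'a::real_inner"
  assumes "norm m = 1" and "t > 0"
  shows "y \<in> ball (x0 - t *\<^sub>R m) t \<longleftrightarrow> (norm (y - x0))\<^sup>2 < 2 * t * ((x0 - y) \<bullet> m)"
proof -
  have "y \<in> ball (x0 - t *\<^sub>R m) t \<longleftrightarrow> (dist y (x0 - t *\<^sub>R m))\<^sup>2 < t\<^sup>2"
    using assms(2) power2_le_iff_abs_le[of "dist y (x0 - t *\<^sub>R m)" t]
    by (auto simp: dist_commute not_le[symmetric])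
  then show ?thesis by (simp add: dist_tangent_center_power2[OF assms(1)])
qed

lemma mem_cball_tangent_iff:
  fixes x0 y m :: "'a::real_inner"
  assumes "norm m = 1" and "t \<ge> 0"
  shows "y \<in> cball (x0 - t *\<^sub>R m) t \<longleftrightarrow> (norm (y - x0))\<^sup>2 \<le> 2 * t * ((x0 - y) \<bullet> m)"
proof -
  have "y \<in> cball (x0 - t *\<^sub>R m) t \<longleftrightarrow> (dist y (x0 - t *\<^sub>R m))\<^sup>2 \<le> t\<^sup>2"
    using assms(2) power2_le_iff_abs_le[of t "dist y (x0 - t *\<^sub>R m)"] by (simp add: dist_commute)
  then show ?thesis by (simp add: dist_tangent_center_power2[OF assms(1)])
qed

lemma dist_tangent_center_eq_iff:
  fixes x0 y m :: "'a::real_inner"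
  assumes "norm m = 1" and "t \<ge> 0"
  shows "dist y (x0 - t *\<^sub>R m) = t \<longleftrightarrow> (norm (y - x0))\<^sup>2 = 2 * t * ((x0 - y) \<bullet> m)"
proof -
  have "dist y (x0 - t *\<^sub>R m) = t \<longleftrightarrow> (dist y (x0 - t *\<^sub>R m))\<^sup>2 = t\<^sup>2"
    using assms(2) by (simp add: power2_eq_iff_nonneg)
  then show ?thesis by (simp add: dist_tangent_center_power2[OF assms(1)])
qed

lemma ball_tangent_subset_of_smaller:
  fixes x0 m :: "'a::real_inner"
  assumes "norm m = 1" and "r > 0"
    and "\<And>r'. 0 < r' \<Longrightarrow> r' < r \<Longrightarrow> ball (x0 - r' *\<^sub>R m) r' \<subseteq> S"
  shows "ball (x0 - r *\<^sub>R m) r \<subseteq> S"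
proof
  fix y assume "y \<in> ball (x0 - r *\<^sub>R m) r"
  then have y: "(norm (y - x0))\<^sup>2 < 2 * r * ((x0 - y) \<bullet> m)"
    using mem_ball_tangent_iff[OF assms(1,2)] by blast
  then have d: "(x0 - y) \<bullet> m > 0"
    using assms(2) by (smt (verit) mult_nonneg_nonpos zero_le_power2)
  \<comment> \<open>y lies on the tangent sphere of radius t0\<close>
  define t0 where "t0 = (norm (y - x0))\<^sup>2 / (2 * ((x0 - y) \<bullet> m))"
  define r' where "r' = (t0 + r) / 2"
  have "t0 < r"
    using y d by (simp add: t0_def pos_divide_less_eq mult.commute mult.left_commute)
  moreover have "t0 \<ge> 0"
    using d by (simp add: t0_def)
  ultimately have r': "0 < r'" "r' < r" and "t0 < r'"
    unfolding r'_def by auto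
  then have "(norm (y - x0))\<^sup>2 < 2 * r' * ((x0 - y) \<bullet> m)"
    using d by (simp add: t0_def pos_divide_less_eq mult.commute mult.left_commute)
  then have "y \<in> ball (x0 - r' *\<^sub>R m) r'"
    using mem_ball_tangent_iff[OF assms(1) r'(1)] by blast
  with assms(3)[OF r'] show "y \<in> S" by blast
qed

lemma eventually_mem_ball_at_right:
  fixes z a v :: "'a::real_inner"
  assumes "dist z a = t" and "v \<bullet> (a - z) > 0"
  shows "\<forall>\<^sub>F s in at_right 0. z + s *\<^sub>R v \<in> ball a t"
proof -
  define b where "b = 2 * (v \<bullet> (a - z)) / ((norm v)\<^sup>2 + 1)"
  have "b > 0" unfolding b_def using assms(2) by (simp add: add_nonneg_pos)
  show ?thesis using eventually_at_right_real[OF \<open>b > 0\<close>]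
  proof eventually_elim
    case (elim s)
    then have "s * ((norm v)\<^sup>2 + 1) < 2 * (v \<bullet> (a - z))"
      unfolding b_def by (simp add: pos_less_divide_eq add_nonneg_pos)
    then have "s * (norm v)\<^sup>2 < 2 * (v \<bullet> (a - z))"
      using elim by (simp add: distrib_left)
    then have "s * (s * (norm v)\<^sup>2) < s * (2 * (v \<bullet> (a - z)))"
      using elim by simp
    moreover have "(dist a (z + s *\<^sub>R v))\<^sup>2 = t\<^sup>2 - s * (2 * (v \<bullet> (a - z))) + s * (s * (norm v)\<^sup>2)"
    proof -
      have "dist a (z + s *\<^sub>R v) = norm ((z - a) + s *\<^sub>R v)"
        by (simp add: dist_norm norm_minus_commute algebra_simps)
      then have "(dist a (z + s *\<^sub>R v))\<^sup>2
          = (z - a) \<bullet> (z - a) + 2 * s * (v \<bullet> (z - a)) + s\<^sup>2 * (v \<bullet> v)"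
        by (simp only: power2_norm_eq_inner) (simp add: inner_add_left inner_add_right inner_commute
            algebra_simps power2_eq_square)
      moreover have "(z - a) \<bullet> (z - a) = t\<^sup>2"
        using assms(1) by (simp add: dist_norm power2_norm_eq_inner[symmetric])
      ultimately show ?thesis
        by (simp add: power2_norm_eq_inner[symmetric] inner_diff_right algebra_simps power2_eq_square)
    qed
    ultimately have "(dist a (z + s *\<^sub>R v))\<^sup>2 < t\<^sup>2" by linarith
    then show ?case
      using power2_le_iff_abs_le[of "dist a (z + s *\<^sub>R v)" t] assms(1) by (auto simp: not_le[symmetric])
  qed
qed

text \<open>A chart-free property of the normal: outward_normal picks one of possibly many charts by
  choice, while this holds for the normal of every chart at z.\<close>

definition outer_normal_at :: "'a::real_inner set \<Rightarrow> 'a \<Rightarrow> 'a \<Rightarrow> bool" where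
  "outer_normal_at S z \<nu> \<longleftrightarrow>
     (\<forall>v. v \<bullet> \<nu> < 0 \<longrightarrow> (\<forall>\<^sub>F s in at_right 0. z + s *\<^sub>R v \<in> S)) \<and>
     (\<forall>v. v \<bullet> \<nu> > 0 \<longrightarrow> (\<forall>\<^sub>F s in at_right 0. z + s *\<^sub>R v \<notin> S))"

lemma outer_normal_at_Compl: "outer_normal_at (- S) z (- \<nu>) \<longleftrightarrow> outer_normal_at S z \<nu>"
  unfolding outer_normal_at_def by auto

lemma outer_normal_at_inner_nonpos:
  assumes "outer_normal_at S z \<nu>" and "\<forall>\<^sub>F s in at_right 0. z + s *\<^sub>R v \<in> S"
  shows "v \<bullet> \<nu> \<le> 0"
proof (rule ccontr)
  assume "\<not> v \<bullet> \<nu> \<le> 0"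
  then have "\<forall>\<^sub>F s in at_right 0. z + s *\<^sub>R v \<notin> S"
    using assms(1) unfolding outer_normal_at_def by auto
  with assms(2) have "\<forall>\<^sub>F s in at_right (0::real). False"
    by eventually_elim blast
  then show False by simp
qed

lemma outer_normal_at_inner_nonneg:
  assumes "outer_normal_at S z \<nu>" and "\<forall>\<^sub>F s in at_right 0. z + s *\<^sub>R v \<notin> S"
  shows "v \<bullet> \<nu> \<ge> 0"
  using outer_normal_at_inner_nonpos[of "- S" z "- \<nu>" v] assms
  by (simp add: outer_normal_at_Compl)

lemma tangent_ball_subset_if_frontier_free:
  fixes S :: "'a::real_inner set"
  assumes "outer_normal_at S z \<nu>" and "norm \<nu> = 1" and "t > 0"
    and "ball (z - t *\<^sub>R \<nu>) t \<inter> frontier S = {}"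
  shows "ball (z - t *\<^sub>R \<nu>) t \<subseteq> S"
proof (rule ccontr)
  let ?B = "ball (z - t *\<^sub>R \<nu>) t"
  assume "\<not> ?B \<subseteq> S"
  have "(- \<nu>) \<bullet> \<nu> < 0" and "(- \<nu>) \<bullet> ((z - t *\<^sub>R \<nu>) - z) > 0"
    using assms(2,3) by (simp_all add: power2_norm_eq_inner[symmetric])
  moreover have "dist z (z - t *\<^sub>R \<nu>) = t"
    using assms(2,3) by (simp add: dist_norm)
  ultimately have "\<forall>\<^sub>F s in at_right 0. z + s *\<^sub>R (- \<nu>) \<in> S \<and> z + s *\<^sub>R (- \<nu>) \<in> ?B"
    using assms(1) unfolding outer_normal_at_def
    by (intro eventually_conj eventually_mem_ball_at_right) blast+
  then have "?B \<inter> S \<noteq> {}"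
    using eventually_happens' trivial_limit_at_right_real by blast
  with \<open>\<not> ?B \<subseteq> S\<close> have "?B \<inter> frontier S \<noteq> {}"
    by (intro connected_Int_frontier) auto
  with assms(4) show False by simp
qed

lemma outer_normal_at_touching_ball:
  fixes S :: "'a::real_inner set"
  assumes "outer_normal_at S z \<nu>" and "norm \<nu> = 1" and "t > 0"
    and "ball a t \<subseteq> S" and "dist z a = t"
  shows "\<nu> = (1 / t) *\<^sub>R (z - a)"
proof -
  define u where "u = (1 / t) *\<^sub>R (a - z)"
  have "norm u = 1"
    using assms(3,5) by (simp add: u_def dist_norm norm_minus_commute)
  then have uu: "u \<bullet> u = 1" and \<nu>\<nu>: "\<nu> \<bullet> \<nu> = 1"
    using assms(2) norm_eq_1 by blast+
  \<comment> \<open>directions pointing into the ball point into S, so they are not acute to \<nu>\<close>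
  have "(\<nu> + u) \<bullet> (a - z) > 0 \<longrightarrow> (\<nu> + u) \<bullet> \<nu> \<le> 0"
  proof
    assume "(\<nu> + u) \<bullet> (a - z) > 0"
    then have "\<forall>\<^sub>F s in at_right 0. z + s *\<^sub>R (\<nu> + u) \<in> S"
      by (rule eventually_mono[OF eventually_mem_ball_at_right[OF assms(5)]]) (use assms(4) in blast)
    then show "(\<nu> + u) \<bullet> \<nu> \<le> 0"
      by (rule outer_normal_at_inner_nonpos[OF assms(1)])
  qed
  moreover have "a - z = t *\<^sub>R u"
    using assms(3) by (simp add: u_def)
  moreover have "(\<nu> + u) \<bullet> (t *\<^sub>R u) = t * (1 + u \<bullet> \<nu>)" and "(\<nu> + u) \<bullet> \<nu> = 1 + u \<bullet> \<nu>"
    using uu \<nu>\<nu> by (simp_all add: inner_add_left inner_commute algebra_simps)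
  ultimately have "t * (1 + u \<bullet> \<nu>) > 0 \<longrightarrow> 1 + u \<bullet> \<nu> \<le> 0"
    by (simp only:)
  then have "u \<bullet> \<nu> \<le> -1"
    using assms(3) by (auto simp: zero_less_mult_iff)
  then have "(norm (\<nu> + u))\<^sup>2 \<le> 0"
    using uu \<nu>\<nu> by (simp add: power2_norm_eq_inner inner_add_left inner_add_right inner_commute)
  then have "\<nu> = - u"
    by (simp add: add_eq_0_iff)
  then show ?thesis
    by (simp add: u_def algebra_simps)
qed

lemma exists_touching_tangent_ball:
  fixes F :: "'a::euclidean_space set"
  assumes "closed F" and "norm m = 1" and "r > 0" and "\<delta> > 0"
    and flat: "ball x0 \<delta> \<inter> ball (x0 - r *\<^sub>R m) r \<inter> F = {}"
    and meets: "ball (x0 - r *\<^sub>R m) r \<inter> F \<noteq> {}"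
  obtains t y where "0 < t" "t \<le> r" "ball (x0 - t *\<^sub>R m) t \<inter> F = {}"
    and "y \<in> F" "y \<noteq> x0" "dist y (x0 - t *\<^sub>R m) = t"
proof -
  \<comment> \<open>f y is the radius of the ball tangent at x0 with y on its sphere; minimise it over F\<close>
  define f where "f y = (norm (y - x0))\<^sup>2 / (2 * ((x0 - y) \<bullet> m))" for y
  define K where "K = (cball (x0 - r *\<^sub>R m) r \<inter> F) - ball x0 \<delta>"
  have K_iff: "y \<in> K \<longleftrightarrow> y \<in> F \<and> \<delta> \<le> norm (y - x0) \<and> (norm (y - x0))\<^sup>2 \<le> 2 * r * ((x0 - y) \<bullet> m)"
    for y
    using mem_cball_tangent_iff[OF assms(2) less_imp_le[OF assms(3)], of y x0]
    by (auto simp: K_def dist_norm norm_minus_commute)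
  have K_pos: "(x0 - y) \<bullet> m > 0" and K_f: "f y > 0" if "y \<in> K" for y
  proof -
    have "(norm (y - x0))\<^sup>2 \<le> 2 * r * ((x0 - y) \<bullet> m)" and "\<delta> \<le> norm (y - x0)"
      using that K_iff by auto
    moreover have "0 < norm (y - x0)"
      using \<open>\<delta> \<le> norm (y - x0)\<close> assms(4) by linarith
    then have "0 < (norm (y - x0))\<^sup>2"
      by simp
    ultimately have "0 < 2 * r * ((x0 - y) \<bullet> m)"
      by linarith
    then show pos: "(x0 - y) \<bullet> m > 0"
      using assms(3) by (simp add: zero_less_mult_iff)
    show "f y > 0"
      unfolding f_def using pos \<open>0 < (norm (y - x0))\<^sup>2\<close> by simp
  qed
  have "compact K"
    unfolding K_def by (intro compact_diff compact_Int_closed compact_cball assms(1) open_ball)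
  moreover have "K \<noteq> {}"
  proof -
    obtain y0 where "y0 \<in> ball (x0 - r *\<^sub>R m) r" "y0 \<in> F"
      using meets by blast
    with flat have "y0 \<in> K"
      unfolding K_def using ball_subset_cball by blast
    then show ?thesis by blast
  qed
  moreover have "continuous_on K f"
  proof -
    have "\<forall>y\<in>K. 2 * ((x0 - y) \<bullet> m) \<noteq> 0"
      using K_pos by (smt (verit))
    then show ?thesis
      unfolding f_def by (intro continuous_on_divide continuous_intros)
  qed
  ultimately have "\<exists>y\<in>K. \<forall>y'\<in>K. f y \<le> f y'"
    by (rule continuous_attains_inf)
  then obtain y where yK: "y \<in> K" and y_min: "\<And>y'. y' \<in> K \<Longrightarrow> f y \<le> f y'"
    by blast
  have y: "y \<in> F" "\<delta> \<le> norm (y - x0)" "(norm (y - x0))\<^sup>2 \<le> 2 * r * ((x0 - y) \<bullet> m)"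
    using yK K_iff by auto
  have "f y \<le> r"
    unfolding f_def using K_pos[OF yK] y(3) by (simp add: pos_divide_le_eq ac_simps)
  moreover have "ball (x0 - f y *\<^sub>R m) (f y) \<inter> F = {}"
  proof (rule ccontr)
    assume "ball (x0 - f y *\<^sub>R m) (f y) \<inter> F \<noteq> {}"
    then obtain y' where y': "y' \<in> F" "(norm (y' - x0))\<^sup>2 < 2 * f y * ((x0 - y') \<bullet> m)"
      using mem_ball_tangent_iff[OF assms(2) K_f[OF yK]] by blast
    then have "0 < 2 * f y * ((x0 - y') \<bullet> m)"
      using zero_le_power2[of "norm (y' - x0)"] by linarith
    then have pos: "(x0 - y') \<bullet> m > 0"
      using K_f[OF yK] by (simp add: zero_less_mult_iff)
    have "2 * f y * ((x0 - y') \<bullet> m) \<le> 2 * r * ((x0 - y') \<bullet> m)"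
      using \<open>f y \<le> r\<close> pos by (intro mult_right_mono) auto
    with y'(2) have "(norm (y' - x0))\<^sup>2 < 2 * r * ((x0 - y') \<bullet> m)"
      by linarith
    then have "y' \<in> ball (x0 - r *\<^sub>R m) r"
      using mem_ball_tangent_iff[OF assms(2,3)] by blast
    with flat y'(1) have "y' \<in> K"
      unfolding K_def using ball_subset_cball by blast
    moreover have "f y' < f y"
      using y'(2) pos by (simp add: f_def[of y'] pos_divide_less_eq ac_simps)
    ultimately show False
      using y_min by fastforce
  qed
  moreover have "dist y (x0 - f y *\<^sub>R m) = f y"
    using K_pos[OF yK] dist_tangent_center_eq_iff[OF assms(2) less_imp_le[OF K_f[OF yK]], of y x0]
    by (simp add: f_def)
  moreover have "y \<noteq> x0"
    using y(2) assms(4) by force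
  ultimately show ?thesis
    using that[of "f y" y] K_f[OF yK] y(1) by blast
qed

lemma ball_Int_tangent_ball_flat_empty:
  fixes x0 m :: "'a::real_inner"
  assumes "norm m = 1" and "r > 0"
    and "\<And>y. y \<in> F \<Longrightarrow> norm (y - x0) < \<delta> \<Longrightarrow> \<bar>(y - x0) \<bullet> m\<bar> \<le> (norm (y - x0))\<^sup>2 / (2 * r)"
  shows "ball x0 \<delta> \<inter> ball (x0 - r *\<^sub>R m) r \<inter> F = {}"
proof -
  have False if y: "y \<in> ball x0 \<delta>" "y \<in> ball (x0 - r *\<^sub>R m) r" "y \<in> F" for y
  proof -
    have "(norm (y - x0))\<^sup>2 < 2 * r * ((x0 - y) \<bullet> m)"
      using y(2) mem_ball_tangent_iff[OF assms(1,2)] by blast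
    moreover have "(x0 - y) \<bullet> m \<le> (norm (y - x0))\<^sup>2 / (2 * r)"
      using assms(3)[of y] y abs_ge_minus_self[of "(y - x0) \<bullet> m"]
      by (auto simp: dist_norm norm_minus_commute inner_diff_left)
    ultimately show False
      using assms(2) by (simp add: le_divide_eq ac_simps)
  qed
  then show ?thesis
    by blast
qed

lemma tangent_ball_subset:
  fixes S F :: "'a::euclidean_space set" and \<nu> :: "'a \<Rightarrow> 'a"
  assumes "closed F" and "frontier S \<subseteq> F" and "x0 \<in> F" and "r > 0"
    and normal: "\<And>y. y \<in> F \<Longrightarrow> outer_normal_at S y (\<nu> y)"
    and unit: "\<And>y. y \<in> F \<Longrightarrow> norm (\<nu> y) = 1"
    and lip: "\<And>x y. x \<in> F \<Longrightarrow> y \<in> F \<Longrightarrow> norm (\<nu> x - \<nu> y) \<le> (1 / r) * dist x y"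
    and flat: "\<And>r'. 0 < r' \<Longrightarrow> r' < r \<Longrightarrow> \<exists>\<delta>>0. \<forall>y\<in>F. norm (y - x0) < \<delta> \<longrightarrow>
                 \<bar>(y - x0) \<bullet> \<nu> x0\<bar> \<le> (norm (y - x0))\<^sup>2 / (2 * r')"
  shows "ball (x0 - r *\<^sub>R \<nu> x0) r \<subseteq> S"
proof (rule ball_tangent_subset_of_smaller[OF unit[OF assms(3)] assms(4)])
  fix r' assume r': "0 < r'" "r' < r"
  define m where "m = \<nu> x0"
  have m: "norm m = 1"
    using unit assms(3) by (simp add: m_def)
  have free: "ball (x0 - r' *\<^sub>R m) r' \<inter> F = {}"
  proof (rule ccontr)
    assume meets: "ball (x0 - r' *\<^sub>R m) r' \<inter> F \<noteq> {}"
    obtain \<delta> where "\<delta> > 0" and est: "\<And>y. y \<in> F \<Longrightarrow> norm (y - x0) < \<delta> \<Longrightarrow>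
        \<bar>(y - x0) \<bullet> m\<bar> \<le> (norm (y - x0))\<^sup>2 / (2 * r')"
      using flat[OF r'] unfolding m_def by blast
    have "ball x0 \<delta> \<inter> ball (x0 - r' *\<^sub>R m) r' \<inter> F = {}"
      using ball_Int_tangent_ball_flat_empty[OF m r'(1) est] .
    then obtain t y where t: "0 < t" "t \<le> r'" "ball (x0 - t *\<^sub>R m) t \<inter> F = {}"
      and y: "y \<in> F" "y \<noteq> x0" "dist y (x0 - t *\<^sub>R m) = t"
      using exists_touching_tangent_ball[OF assms(1) m r'(1) \<open>\<delta> > 0\<close> _ meets] by blast
    have "ball (x0 - t *\<^sub>R m) t \<subseteq> S"
      using tangent_ball_subset_if_frontier_free[OF normal[OF assms(3)] unit[OF assms(3)] t(1)]
        t(3) assms(2) unfolding m_def by blast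
    then have "\<nu> y = (1 / t) *\<^sub>R (y - (x0 - t *\<^sub>R m))"
      using outer_normal_at_touching_ball[OF normal[OF y(1)] unit[OF y(1)] t(1)] y(3) by blast
    then have "\<nu> y - \<nu> x0 = (1 / t) *\<^sub>R (y - x0)"
      using t(1) by (simp add: m_def algebra_simps)
    then have "norm (\<nu> y - \<nu> x0) = dist y x0 / t"
      using t(1) by (simp add: dist_norm)
    moreover have "dist y x0 / r < dist y x0 / t"
      using y(2) t r' by (intro divide_strict_left_mono) auto
    ultimately show False
      using lip[OF y(1) assms(3)] by simp
  qed
  then show "ball (x0 - r' *\<^sub>R \<nu> x0) r' \<subseteq> S"
    using tangent_ball_subset_if_frontier_free[OF normal[OF assms(3)] unit[OF assms(3)] r'(1)] assms(2)
    unfolding m_def by blast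
qed

abbreviation eN :: "real^('n::{finite,linorder})" where
  "eN \<equiv> axis lastidx 1"

lemma orthogonal_matrix_mult_transpose_cancel:
  fixes A :: "real^'n^'n"
  assumes "orthogonal_matrix A"
  shows "A *v (transpose A *v u) = u" and "transpose A *v (A *v u) = u"
  using assms unfolding orthogonal_matrix_def
  by (simp_all only: matrix_vector_mul_assoc matrix_vector_mul_lid)

lemma norm_orthogonal_matrix_mult:
  fixes A :: "real^'n^'n"
  assumes "orthogonal_matrix A"
  shows "norm (A *v x) = norm x"
  using assms orthogonal_transformation_norm[of "(*v) A"]
  by (simp add: orthogonal_transformation_matrix matrix_vector_mul_linear)

lemma inner_transpose_mult:
  fixes A :: "real^'n^'n"
  shows "(transpose A *v u) \<bullet> v = u \<bullet> (A *v v)"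
  by (simp add: transpose_matrix_vector dot_lmul_matrix)

lemma orthogonal_matrix_affine_image_iff:
  fixes A :: "real^'n^'n"
  assumes "orthogonal_matrix A"
  shows "A *v y + c \<in> (\<lambda>x. A *v x + c) ` S \<longleftrightarrow> y \<in> S"
  using orthogonal_matrix_mult_transpose_cancel(2)[OF assms] by (auto, metis)

lemma hproj_add_last: "hproj x + (x $ lastidx) *\<^sub>R eN = x"
  by (simp add: hproj_def vec_eq_iff axis_def)

lemma hproj_eq_self: "y $ lastidx = 0 \<Longrightarrow> hproj y = y"
  by (simp add: hproj_def vec_eq_iff)

lemma hproj_simps [simp]:
  "hproj x $ lastidx = 0"
  "hproj (x + y) = hproj x + hproj y"
  "hproj (a *\<^sub>R x) = a *\<^sub>R hproj x"
  "hproj eN = 0"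
  by (simp_all add: hproj_def vec_eq_iff axis_def)

lemma norm_hproj_le: "norm (hproj x) \<le> norm x"
  by (rule norm_le_componentwise_cart) (simp add: hproj_def)

lemma hproj_eq_diff: "hproj x = x - (x $ lastidx) *\<^sub>R eN"
  by (simp add: hproj_def vec_eq_iff axis_def)

lemma open_cyl: "open (cyl \<rho> h :: (real^('n::{finite,linorder})) set)"
  unfolding cyl_def hproj_eq_diff Collect_conj_eq
  by (intro open_Int open_Collect_less continuous_intros)

lemma is_chartD:
  assumes "is_chart \<Omega> x0 \<rho> h A c \<phi>"
  shows "\<rho> > 0" "h > 0" "orthogonal_matrix A" "A *v x0 + c = 0"
    "\<And>y. y \<in> hdisc \<rho> \<Longrightarrow> \<bar>\<phi> y\<bar> < h" "\<phi> 0 = 0"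
    "cyl \<rho> h \<inter> (\<lambda>x. A *v x + c) ` \<Omega> = {x \<in> cyl \<rho> h. x $ lastidx < \<phi> (hproj x)}"
    "cyl \<rho> h \<inter> (\<lambda>x. A *v x + c) ` frontier \<Omega> = {x \<in> cyl \<rho> h. x $ lastidx = \<phi> (hproj x)}"
  using assms unfolding is_chart_def by auto

lemma is_chart_derivative:
  assumes "is_chart \<Omega> x0 \<rho> h A c \<phi>"
  obtains \<phi>' where "\<And>y. y \<in> hdisc \<rho> \<Longrightarrow> (\<phi> has_derivative \<phi>' y) (at y within hdisc \<rho>)"
    and "\<And>v. v $ lastidx = 0 \<Longrightarrow> \<phi>' 0 v = 0"
  using assms unfolding is_chart_def by metis

lemma chart_below_graph:
  assumes "is_chart \<Omega> x0 \<rho> h A c \<phi>" and "x \<in> cyl \<rho> h" and "x $ lastidx < \<phi> (hproj x)"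
  shows "x \<in> (\<lambda>x. A *v x + c) ` \<Omega>"
  using is_chartD(7)[OF assms(1)] assms(2,3) by blast

lemma chart_on_graph:
  assumes "is_chart \<Omega> x0 \<rho> h A c \<phi>" and "x \<in> cyl \<rho> h" and "x $ lastidx = \<phi> (hproj x)"
  shows "x \<in> (\<lambda>x. A *v x + c) ` frontier \<Omega>"
  using is_chartD(8)[OF assms(1)] assms(2,3) by blast

lemma chart_above_graph:
  assumes "is_chart \<Omega> x0 \<rho> h A c \<phi>" and "x \<in> cyl \<rho> h" and "x $ lastidx > \<phi> (hproj x)"
  shows "x \<notin> (\<lambda>x. A *v x + c) ` closure \<Omega>"
proof
  assume "x \<in> (\<lambda>x. A *v x + c) ` closure \<Omega>"
  then have "x \<in> cyl \<rho> h \<inter> (\<lambda>x. A *v x + c) ` \<Omega> \<or> x \<in> cyl \<rho> h \<inter> (\<lambda>x. A *v x + c) ` frontier \<Omega>"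
    using assms(2) unfolding closure_Un_frontier image_Un by blast
  then show False
    unfolding is_chartD(7,8)[OF assms(1)] using assms(3) by auto
qed

lemma graph_point_in_cyl:
  assumes "is_chart \<Omega> x0 \<rho> h A c \<phi>" and "z' $ lastidx = 0" and "norm z' < \<rho>"
  shows "z' + \<phi> z' *\<^sub>R eN \<in> cyl \<rho> h"
  using assms is_chartD(5)[OF assms(1), of z'] by (simp add: cyl_def hdisc_def hproj_eq_self)

lemma hdisc_directional_quotient:
  fixes \<phi> :: "real^('n::{finite,linorder}) \<Rightarrow> real"
  assumes "(\<phi> has_derivative L) (at z' within hdisc \<rho>)"
    and "z' $ lastidx = 0" and "norm z' < \<rho>" and "w $ lastidx = 0"
  shows "((\<lambda>s. (\<phi> (z' + s *\<^sub>R w) - \<phi> z') / s) \<longlongrightarrow> L w) (at_right 0)"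
proof (rule tendsto_directional_quotient[OF assms(1)])
  show "(\<rho> - norm z') / (norm w + 1) > 0"
    using assms(3) by (simp add: add_nonneg_pos)
  fix u assume u: "0 \<le> u" "u \<le> (\<rho> - norm z') / (norm w + 1)"
  then have "u * norm w \<le> \<rho> - norm z'"
    by (smt (verit, best) mult_left_mono norm_ge_zero pos_le_divide_eq)
  then have "norm (z' + u *\<^sub>R w) \<le> \<rho>"
    using norm_triangle_ineq[of z' "u *\<^sub>R w"] u(1) by simp
  then show "z' + u *\<^sub>R w \<in> hdisc \<rho>"
    using assms(2,4) by (simp add: hdisc_def)
qed

lemma chart_ray_in_cyl:
  assumes "is_chart \<Omega> x0 \<rho> h A c \<phi>" and "z' $ lastidx = 0" and "norm z' < \<rho>"
  shows "\<forall>\<^sub>F s in at_right 0. z' + \<phi> z' *\<^sub>R eN + s *\<^sub>R W \<in> cyl \<rho> h"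
proof -
  have "((\<lambda>s. z' + \<phi> z' *\<^sub>R eN + s *\<^sub>R W) \<longlongrightarrow> z' + \<phi> z' *\<^sub>R eN + (0::real) *\<^sub>R W) (at_right 0)"
    by (intro tendsto_intros)
  then show ?thesis
    using topological_tendstoD[OF _ open_cyl graph_point_in_cyl[OF assms]] by simp
qed

lemma chart_eventually_below:
  assumes ch: "is_chart \<Omega> x0 \<rho> h A c \<phi>" and der: "(\<phi> has_derivative L) (at z' within hdisc \<rho>)"
    and z': "z' $ lastidx = 0" "norm z' < \<rho>" and w: "w $ lastidx = 0" and "t < L w"
  shows "\<forall>\<^sub>F s in at_right 0. z' + \<phi> z' *\<^sub>R eN + s *\<^sub>R (w + t *\<^sub>R eN) \<in> (\<lambda>x. A *v x + c) ` \<Omega>"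
  using order_tendstoD(1)[OF hdisc_directional_quotient[OF der z' w] \<open>t < L w\<close>]
    eventually_at_right_less[of "0::real"] chart_ray_in_cyl[OF ch z', of "w + t *\<^sub>R eN"]
proof eventually_elim
  case (elim s)
  then have "\<phi> z' + s * t < \<phi> (z' + s *\<^sub>R w)"
    by (simp add: pos_less_divide_eq algebra_simps)
  then show ?case
    using chart_below_graph[OF ch elim(3)] z' w by (simp add: hproj_eq_self)
qed

lemma chart_eventually_above:
  assumes ch: "is_chart \<Omega> x0 \<rho> h A c \<phi>" and der: "(\<phi> has_derivative L) (at z' within hdisc \<rho>)"
    and z': "z' $ lastidx = 0" "norm z' < \<rho>" and w: "w $ lastidx = 0" and "t > L w"
  shows "\<forall>\<^sub>F s in at_right 0. z' + \<phi> z' *\<^sub>R eN + s *\<^sub>R (w + t *\<^sub>R eN) \<notin> (\<lambda>x. A *v x + c) ` closure \<Omega>"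
  using order_tendstoD(2)[OF hdisc_directional_quotient[OF der z' w] \<open>t > L w\<close>]
    eventually_at_right_less[of "0::real"] chart_ray_in_cyl[OF ch z', of "w + t *\<^sub>R eN"]
proof eventually_elim
  case (elim s)
  then have "\<phi> (z' + s *\<^sub>R w) < \<phi> z' + s * t"
    by (simp add: pos_divide_less_eq algebra_simps)
  then show ?case
    using chart_above_graph[OF ch elim(3)] z' w by (simp add: hproj_eq_self)
qed

lemma chart_outer_normal_at:
  fixes \<Omega> :: "(real^('n::{finite,linorder})) set"
  assumes ch: "is_chart \<Omega> z \<rho> h A c \<phi>"
  shows "outer_normal_at \<Omega> z (transpose A *v eN)"
    and "outer_normal_at (closure \<Omega>) z (transpose A *v eN)"
proof -
  note chart = is_chartD[OF ch]
  obtain \<phi>' where der_disc: "\<And>y. y \<in> hdisc \<rho> \<Longrightarrow> (\<phi> has_derivative \<phi>' y) (at y within hdisc \<rho>)"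
    and flat0: "\<And>v. v $ lastidx = 0 \<Longrightarrow> \<phi>' 0 v = 0"
    using is_chart_derivative[OF ch] by blast
  have der: "(\<phi> has_derivative \<phi>' 0) (at 0 within hdisc \<rho>)"
    using der_disc chart(1) by (simp add: hdisc_def)
  have origin: "(0::real^('n::{finite,linorder})) $ lastidx = 0"
    "norm (0::real^('n::{finite,linorder})) < \<rho>"
    using chart(1) by auto
  have ray: "A *v (z + s *\<^sub>R v) + c
      = 0 + \<phi> 0 *\<^sub>R eN + s *\<^sub>R (hproj (A *v v) + ((A *v v) $ lastidx) *\<^sub>R eN)" for s v
    using chart(4,6) by (simp add: hproj_add_last matrix_vector_right_distrib
        matrix_vector_mult_scaleR algebra_simps)
  have inner: "v \<bullet> (transpose A *v eN) = (A *v v) $ lastidx" for v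
    unfolding inner_commute[of v] inner_transpose_mult by (simp add: inner_axis')
  have into: "\<forall>\<^sub>F s in at_right 0. z + s *\<^sub>R v \<in> \<Omega>" if "v \<bullet> (transpose A *v eN) < 0" for v
  proof -
    have "(A *v v) $ lastidx < \<phi>' 0 (hproj (A *v v))"
      using that[unfolded inner] flat0[of "hproj (A *v v)"] by simp
    from chart_eventually_below[OF ch der origin hproj_simps(1)[of "A *v v"] this] show ?thesis
      by (simp only: ray[symmetric] orthogonal_matrix_affine_image_iff[OF chart(3)])
  qed
  have out: "\<forall>\<^sub>F s in at_right 0. z + s *\<^sub>R v \<notin> closure \<Omega>" if "v \<bullet> (transpose A *v eN) > 0" for v
  proof -
    have "(A *v v) $ lastidx > \<phi>' 0 (hproj (A *v v))"
      using that[unfolded inner] flat0[of "hproj (A *v v)"] by simp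
    from chart_eventually_above[OF ch der origin hproj_simps(1)[of "A *v v"] this] show ?thesis
      by (simp only: ray[symmetric] orthogonal_matrix_affine_image_iff[OF chart(3)])
  qed
  show "outer_normal_at \<Omega> z (transpose A *v eN)"
    unfolding outer_normal_at_def using into out closure_subset
    by (meson eventually_mono subsetD)
  show "outer_normal_at (closure \<Omega>) z (transpose A *v eN)"
    unfolding outer_normal_at_def using into out closure_subset
    by (meson eventually_mono subsetD)
qed

lemma outward_normal_chart:
  assumes "C1_boundary \<Omega>" and "z \<in> frontier \<Omega>"
  obtains \<rho> h A c \<phi> where "is_chart \<Omega> z \<rho> h A c \<phi>" and "outward_normal \<Omega> z = transpose A *v eN"
proof -
  have "\<exists>\<nu> \<rho> h A c \<phi>. is_chart \<Omega> z \<rho> h A c \<phi> \<and> \<nu> = transpose A *v eN"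
    using assms unfolding C1_boundary_def by blast
  from someI_ex[OF this] show ?thesis
    using that unfolding outward_normal_def by blast
qed

lemma outer_normal_at_outward_normal:
  assumes "C1_boundary \<Omega>" and "z \<in> frontier \<Omega>"
  shows "outer_normal_at \<Omega> z (outward_normal \<Omega> z)"
    and "outer_normal_at (closure \<Omega>) z (outward_normal \<Omega> z)"
  by (metis outward_normal_chart[OF assms] chart_outer_normal_at)+

lemma norm_outward_normal:
  assumes "C1_boundary \<Omega>" and "z \<in> frontier \<Omega>"
  shows "norm (outward_normal \<Omega> z) = 1"
proof -
  obtain \<rho> h A c \<phi> where ch: "is_chart \<Omega> z \<rho> h A c \<phi>"
    and n: "outward_normal \<Omega> z = transpose A *v eN"
    using outward_normal_chart[OF assms] .
  have "orthogonal_matrix (transpose A)"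
    using is_chartD(3)[OF ch] by (simp add: orthogonal_matrix_transpose)
  then show ?thesis
    unfolding n by (simp only: norm_orthogonal_matrix_mult norm_axis_1)
qed

lemma chart_derivative_eq_normal_slope:
  assumes ch: "is_chart \<Omega> x0 \<rho> h A c \<phi>" and der: "(\<phi> has_derivative L) (at z' within hdisc \<rho>)"
    and z': "z' $ lastidx = 0" "norm z' < \<rho>" and z: "A *v z + c = z' + \<phi> z' *\<^sub>R eN"
    and normal: "outer_normal_at \<Omega> z \<nu>" and pos: "(A *v \<nu>) $ lastidx > 0"
    and w: "w $ lastidx = 0"
  shows "L w = - (w \<bullet> (A *v \<nu>)) / (A *v \<nu>) $ lastidx"
proof -
  note chart = is_chartD[OF ch]
  define \<mu> where "\<mu> = A *v \<nu>"
  have ray: "A *v (z + s *\<^sub>R (transpose A *v W)) + c = z' + \<phi> z' *\<^sub>R eN + s *\<^sub>R W" for s W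
    using z orthogonal_matrix_mult_transpose_cancel(1)[OF chart(3)]
    by (simp add: matrix_vector_right_distrib matrix_vector_mult_scaleR algebra_simps)
  \<comment> \<open>the ray from z in direction A^T (w + t e_N) enters \<Omega> for t < L w and leaves its closure
    for t > L w, so its angle with the normal pins down L w\<close>
  have slope: "(transpose A *v (w + t *\<^sub>R eN)) \<bullet> \<nu> = w \<bullet> \<mu> + t * \<mu> $ lastidx" for t
    unfolding inner_transpose_mult \<mu>_def by (simp add: inner_add_left inner_axis')
  have "t \<le> - (w \<bullet> \<mu>) / \<mu> $ lastidx" if "t < L w" for t
  proof -
    have "\<forall>\<^sub>F s in at_right 0. z + s *\<^sub>R (transpose A *v (w + t *\<^sub>R eN)) \<in> \<Omega>"
      using chart_eventually_below[OF ch der z' w that]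
      by (simp only: ray[symmetric] orthogonal_matrix_affine_image_iff[OF chart(3)])
    from outer_normal_at_inner_nonpos[OF normal this] show ?thesis
      using pos unfolding slope \<mu>_def by (simp add: field_simps)
  qed
  then have le: "L w \<le> - (w \<bullet> \<mu>) / \<mu> $ lastidx"
    by (rule dense_le)
  have "- (w \<bullet> \<mu>) / \<mu> $ lastidx \<le> t" if "L w < t" for t
  proof -
    have "\<forall>\<^sub>F s in at_right 0. z + s *\<^sub>R (transpose A *v (w + t *\<^sub>R eN)) \<notin> closure \<Omega>"
      using chart_eventually_above[OF ch der z' w that]
      by (simp only: ray[symmetric] orthogonal_matrix_affine_image_iff[OF chart(3)])
    then have "\<forall>\<^sub>F s in at_right 0. z + s *\<^sub>R (transpose A *v (w + t *\<^sub>R eN)) \<notin> \<Omega>"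
      by (rule eventually_mono) (use closure_subset in blast)
    from outer_normal_at_inner_nonneg[OF normal this] show ?thesis
      using pos unfolding slope \<mu>_def by (simp add: field_simps)
  qed
  then have "- (w \<bullet> \<mu>) / \<mu> $ lastidx \<le> L w"
    by (rule dense_ge)
  with le show ?thesis
    unfolding \<mu>_def by simp
qed

lemma normal_slope_bound:
  fixes \<mu> w :: "real^('n::{finite,linorder})"
  assumes "norm (\<mu> - eN) \<le> K" and "K < 1" and "w $ lastidx = 0"
  shows "\<mu> $ lastidx > 0" and "\<bar>w \<bullet> \<mu> / \<mu> $ lastidx\<bar> \<le> K / (1 - K) * norm w"
proof -
  have "\<bar>\<mu> $ lastidx - 1\<bar> \<le> K"
    using component_le_norm_cart[of "\<mu> - eN" lastidx] assms(1) by simp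
  then have last: "1 - K \<le> \<mu> $ lastidx"
    by linarith
  then show "\<mu> $ lastidx > 0"
    using assms(2) by linarith
  have "w \<bullet> \<mu> = w \<bullet> (\<mu> - eN)"
    using assms(3) by (simp add: inner_diff_right inner_axis)
  also have "\<bar>\<dots>\<bar> \<le> norm w * K"
    using Cauchy_Schwarz_ineq2[of w "\<mu> - eN"] assms(1) by (smt (verit) mult_left_mono norm_ge_zero)
  finally have "\<bar>w \<bullet> \<mu>\<bar> / \<mu> $ lastidx \<le> norm w * K / (1 - K)"
    using last assms(2) by (intro frac_le) auto
  then show "\<bar>w \<bullet> \<mu> / \<mu> $ lastidx\<bar> \<le> K / (1 - K) * norm w"
    using \<open>\<mu> $ lastidx > 0\<close> by (simp add: mult.commute)
qed

lemma has_derivative_horizontal_zero_small: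
  fixes \<phi> :: "real^('n::{finite,linorder}) \<Rightarrow> real"
  assumes "(\<phi> has_derivative L) (at 0 within hdisc \<rho>)" and "\<phi> 0 = 0"
    and "\<And>v. v $ lastidx = 0 \<Longrightarrow> L v = 0" and "\<epsilon> > 0"
  obtains d where "d > 0" and "\<And>y. y \<in> hdisc \<rho> \<Longrightarrow> norm y < d \<Longrightarrow> \<bar>\<phi> y\<bar> \<le> \<epsilon> * norm y"
proof -
  obtain d where "d > 0" and d: "\<And>y. y \<in> hdisc \<rho> \<Longrightarrow> norm (y - 0) < d \<Longrightarrow>
      norm (\<phi> y - \<phi> 0 - L (y - 0)) \<le> \<epsilon> * norm (y - 0)"
    using assms(1,4) unfolding has_derivative_within_alt by blast
  have "\<bar>\<phi> y\<bar> \<le> \<epsilon> * norm y" if "y \<in> hdisc \<rho>" "norm y < d" for y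
    using d[of y] that assms(2) assms(3)[of y] by (simp add: hdisc_def)
  with \<open>d > 0\<close> show ?thesis
    using that by blast
qed

lemma chart_normal_tilt:
  assumes L: "cond_L r \<Omega>" and ch: "is_chart \<Omega> x0 \<rho> h A c \<phi>" and x0: "x0 \<in> frontier \<Omega>"
    and n0: "outward_normal \<Omega> x0 = transpose A *v eN" and z: "z \<in> frontier \<Omega>"
  shows "norm (A *v outward_normal \<Omega> z - eN) \<le> norm (A *v z + c) / r"
proof -
  note chart = is_chartD[OF ch]
  have "A *v x0 = - c"
    using chart(4) by (simp add: eq_neg_iff_add_eq_0)
  then have dist: "dist z x0 = norm (A *v z + c)"
    using norm_orthogonal_matrix_mult[OF chart(3), of "z - x0"]
    by (simp add: dist_norm matrix_vector_mult_diff_distrib)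
  have "A *v outward_normal \<Omega> z - eN = A *v (outward_normal \<Omega> z - outward_normal \<Omega> x0)"
    unfolding n0 matrix_vector_mult_diff_distrib
    by (simp only: orthogonal_matrix_mult_transpose_cancel(1)[OF chart(3)])
  then have "norm (A *v outward_normal \<Omega> z - eN) \<le> (1 / r) * dist z x0"
    using L z x0 unfolding cond_L_def by (simp add: norm_orthogonal_matrix_mult[OF chart(3)])
  then show ?thesis
    by (simp add: dist)
qed

lemma chart_slope_bound:
  fixes \<Omega> :: "(real^('n::{finite,linorder})) set"
  assumes L: "cond_L r \<Omega>" and ch: "is_chart \<Omega> x0 \<rho> h A c \<phi>" and x0: "x0 \<in> frontier \<Omega>"
    and n0: "outward_normal \<Omega> x0 = transpose A *v eN"
    and der: "(\<phi> has_derivative L) (at z' within hdisc \<rho>)"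
    and z': "z' $ lastidx = 0" "norm z' < \<rho>"
    and "r > 0" and close: "norm (z' + \<phi> z' *\<^sub>R eN) \<le> K * r" and "K < 1"
    and w: "w $ lastidx = 0"
  shows "\<bar>L w\<bar> \<le> K / (1 - K) * norm w"
proof -
  have "z' + \<phi> z' *\<^sub>R eN \<in> (\<lambda>x. A *v x + c) ` frontier \<Omega>"
    using chart_on_graph[OF ch graph_point_in_cyl[OF ch z']] z'(1) by (simp add: hproj_eq_self)
  then obtain z where z: "z \<in> frontier \<Omega>" "A *v z + c = z' + \<phi> z' *\<^sub>R eN"
    by (metis (no_types, lifting) imageE)
  define \<mu> where "\<mu> = A *v outward_normal \<Omega> z"
  have "norm (z' + \<phi> z' *\<^sub>R eN) / r \<le> K"
    using close \<open>r > 0\<close> by (simp add: pos_divide_le_eq)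
  then have "norm (\<mu> - eN) \<le> K"
    using chart_normal_tilt[OF L ch x0 n0 z(1)] z(2) by (simp add: \<mu>_def)
  note slope = normal_slope_bound[OF this \<open>K < 1\<close> w]
  have "L w = - (w \<bullet> \<mu>) / \<mu> $ lastidx"
    unfolding \<mu>_def
  proof (rule chart_derivative_eq_normal_slope[OF ch der z' z(2) _ _ w])
    show "outer_normal_at \<Omega> z (outward_normal \<Omega> z)"
      using L z(1) by (simp add: cond_L_def outer_normal_at_outward_normal)
  qed (use slope(1) \<mu>_def in simp)
  with slope(2) show ?thesis
    by simp
qed

lemma chart_derivative_bound:
  fixes \<Omega> :: "(real^('n::{finite,linorder})) set"
  assumes L: "cond_L r \<Omega>" and ch: "is_chart \<Omega> x0 \<rho> h A c \<phi>" and x0: "x0 \<in> frontier \<Omega>"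
    and n0: "outward_normal \<Omega> x0 = transpose A *v eN"
    and der: "\<And>y. y \<in> hdisc \<rho> \<Longrightarrow> (\<phi> has_derivative \<phi>' y) (at y within hdisc \<rho>)"
    and flat0: "\<And>v. v $ lastidx = 0 \<Longrightarrow> \<phi>' 0 v = 0"
    and r': "0 < r'" "r' < r"
  obtains \<delta> where "0 < \<delta>" "\<delta> \<le> \<rho>"
    and "\<And>z' w. z' $ lastidx = 0 \<Longrightarrow> norm z' < \<delta> \<Longrightarrow> w $ lastidx = 0 \<Longrightarrow>
           \<bar>\<phi>' z' w\<bar> \<le> norm z' / r' * norm w"
proof -
  note chart = is_chartD[OF ch]
  define \<epsilon> where "\<epsilon> = (r - r') / (2 * r')"
  have "\<epsilon> > 0" and \<epsilon>_r': "(1 + \<epsilon>) * r' = (r + r') / 2"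
    using r' by (simp_all add: \<epsilon>_def field_simps)
  have "0 \<in> hdisc \<rho>"
    using chart(1) by (simp add: hdisc_def)
  then obtain d where "d > 0" and small: "\<And>y. y \<in> hdisc \<rho> \<Longrightarrow> norm y < d \<Longrightarrow> \<bar>\<phi> y\<bar> \<le> \<epsilon> * norm y"
    using has_derivative_horizontal_zero_small[OF der chart(6) flat0 \<open>\<epsilon> > 0\<close>] by blast
  define \<delta> where "\<delta> = min \<rho> (min d ((r - r') / (2 * (1 + \<epsilon>))))"
  have "\<bar>\<phi>' z' w\<bar> \<le> norm z' / r' * norm w"
    if z': "z' $ lastidx = 0" "norm z' < \<delta>" and w: "w $ lastidx = 0" for z' w
  proof -
    have z'_disc: "norm z' < \<rho>" "z' \<in> hdisc \<rho>" and "norm z' < d"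
      and z'_small: "(1 + \<epsilon>) * norm z' < (r - r') / 2"
      using z' \<open>\<epsilon> > 0\<close> by (auto simp: \<delta>_def hdisc_def field_simps)
    define K where "K = (1 + \<epsilon>) * norm z' / r"
    have Kr: "K * r = (1 + \<epsilon>) * norm z'"
      using r' by (simp add: K_def)
    have "norm (z' + \<phi> z' *\<^sub>R eN) \<le> norm z' + \<bar>\<phi> z'\<bar>"
      using norm_triangle_ineq[of z' "\<phi> z' *\<^sub>R eN"] by simp
    also have "\<dots> \<le> K * r"
      using small[OF z'_disc(2) \<open>norm z' < d\<close>] unfolding Kr by (simp add: algebra_simps)
    finally have close: "norm (z' + \<phi> z' *\<^sub>R eN) \<le> K * r" .
    have "K < 1"
      using z'_small \<epsilon>_r' r' by (simp add: K_def field_simps)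
    have "\<bar>\<phi>' z' w\<bar> \<le> K / (1 - K) * norm w"
      using chart_slope_bound[OF L ch x0 n0 der[OF z'_disc(2)] z'(1) z'_disc(1) _ close \<open>K < 1\<close> w] r'
      by linarith
    also have "K / (1 - K) \<le> norm z' / r'"
    proof -
      \<comment> \<open>equivalent to (1 + \<epsilon>) (r' + |z'|) \<le> r\<close>
      have "K * (r' + norm z') \<le> norm z'"
        using z'_small \<epsilon>_r' r' mult_right_mono[of "(1 + \<epsilon>) * (r' + norm z')" r "norm z'"]
        by (simp add: K_def field_simps)
      then show ?thesis
        using \<open>K < 1\<close> r' by (simp add: field_simps)
    qed
    finally show ?thesis
      by (simp add: mult_right_mono)
  qed
  moreover have "0 < \<delta>" "\<delta> \<le> \<rho>"
    using chart(1) \<open>d > 0\<close> \<open>\<epsilon> > 0\<close> r' by (auto simp: \<delta>_def)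
  ultimately show ?thesis
    using that by blast
qed

lemma graph_quadratic_bound:
  fixes \<phi> :: "real^('n::{finite,linorder}) \<Rightarrow> real"
  assumes der: "\<And>y. y \<in> hdisc \<rho> \<Longrightarrow> (\<phi> has_derivative \<phi>' y) (at y within hdisc \<rho>)"
    and "\<phi> 0 = 0" and "\<delta> \<le> \<rho>" and "r' > 0"
    and bound: "\<And>z' w. z' $ lastidx = 0 \<Longrightarrow> norm z' < \<delta> \<Longrightarrow> w $ lastidx = 0 \<Longrightarrow>
                  \<bar>\<phi>' z' w\<bar> \<le> norm z' / r' * norm w"
    and y: "y $ lastidx = 0" "norm y < \<delta>"
  shows "\<bar>\<phi> y\<bar> \<le> (norm y)\<^sup>2 / (2 * r')"
proof -
  have seg: "s *\<^sub>R y \<in> hdisc \<rho>" and seg_small: "norm (s *\<^sub>R y) < \<delta>"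
    if "s \<in> {0..1}" for s
    using that y assms(3) mult_left_le_one_le[of "norm y" s] by (auto simp: hdisc_def)
  have D: "((\<lambda>s. \<phi> (s *\<^sub>R y)) has_real_derivative \<phi>' (s *\<^sub>R y) y) (at s within I)"
    if "s \<in> {0..1}" "I \<subseteq> {0..1}" for s I
  proof -
    have "((\<lambda>u. \<phi> (0 + u *\<^sub>R y)) has_real_derivative \<phi>' (s *\<^sub>R y) y) (at s within I)"
      by (rule has_real_derivative_along_line) (use der seg that in auto)
    then show ?thesis
      by simp
  qed
  define C where "C = (norm y)\<^sup>2 / (2 * r')"
  have "continuous_on {0..1} (\<lambda>s. \<phi> (s *\<^sub>R y))"
    unfolding continuous_on_eq_continuous_within using D[of _ "{0..1}"] by (blast intro: DERIV_continuous)
  moreover have "((\<lambda>s. \<phi> (s *\<^sub>R y)) has_real_derivative \<phi>' (s *\<^sub>R y) y) (at s)" if "0 < s" "s < 1" for s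
    using D[of s "{0<..<1}"] that at_within_open[of s "{0<..<1}"] by (simp add: subset_eq)
  moreover have "((\<lambda>s. s\<^sup>2 * C) has_real_derivative 2 * s * C) (at s)" for s
    by (auto intro!: derivative_eq_intros)
  moreover have "\<bar>\<phi>' (s *\<^sub>R y) y\<bar> \<le> 2 * s * C" if "0 < s" "s < 1" for s
    using bound[of "s *\<^sub>R y" y] seg_small[of s] that y(1) \<open>r' > 0\<close>
    by (simp add: C_def power2_eq_square)
  moreover have "continuous_on {0..1} (\<lambda>s. s\<^sup>2 * C)"
    by (intro continuous_intros)
  ultimately have "\<bar>\<phi> (1 *\<^sub>R y) - \<phi> (0 *\<^sub>R y)\<bar> \<le> 1\<^sup>2 * C - 0\<^sup>2 * C"
    by (intro DERIV_abs_diff_le_comparison[where f = "\<lambda>s. s\<^sup>2 * C" and g = "\<lambda>s. \<phi> (s *\<^sub>R y)"]) auto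
  then show ?thesis
    using assms(2) by (simp add: C_def)
qed

lemma frontier_flat_near:
  fixes \<Omega> :: "(real^('n::{finite,linorder})) set"
  assumes L: "cond_L r \<Omega>" and x0: "x0 \<in> frontier \<Omega>" and r': "0 < r'" "r' < r"
  shows "\<exists>\<delta>>0. \<forall>y\<in>frontier \<Omega>. norm (y - x0) < \<delta> \<longrightarrow>
           \<bar>(y - x0) \<bullet> outward_normal \<Omega> x0\<bar> \<le> (norm (y - x0))\<^sup>2 / (2 * r')"
proof -
  have C1: "C1_boundary \<Omega>"
    using L by (simp add: cond_L_def)
  obtain \<rho> h A c \<phi> where ch: "is_chart \<Omega> x0 \<rho> h A c \<phi>"
    and n0: "outward_normal \<Omega> x0 = transpose A *v eN"
    using outward_normal_chart[OF C1 x0] .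
  note chart = is_chartD[OF ch]
  obtain \<phi>' where der: "\<And>y. y \<in> hdisc \<rho> \<Longrightarrow> (\<phi> has_derivative \<phi>' y) (at y within hdisc \<rho>)"
    and flat0: "\<And>v. v $ lastidx = 0 \<Longrightarrow> \<phi>' 0 v = 0"
    using is_chart_derivative[OF ch] by blast
  obtain \<delta> where "0 < \<delta>" "\<delta> \<le> \<rho>"
    and bound: "\<And>z' w. z' $ lastidx = 0 \<Longrightarrow> norm z' < \<delta> \<Longrightarrow> w $ lastidx = 0 \<Longrightarrow>
                  \<bar>\<phi>' z' w\<bar> \<le> norm z' / r' * norm w"
    using chart_derivative_bound[OF L ch x0 n0 der flat0 r'] by blast
  have "\<bar>(y - x0) \<bullet> outward_normal \<Omega> x0\<bar> \<le> (norm (y - x0))\<^sup>2 / (2 * r')"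
    if y: "y \<in> frontier \<Omega>" "norm (y - x0) < min \<delta> h" for y
  proof -
    define Y where "Y = A *v y + c"
    have "A *v x0 = - c"
      using chart(4) by (simp add: eq_neg_iff_add_eq_0)
    then have AY: "A *v (y - x0) = Y" and nY: "norm Y = norm (y - x0)"
      using norm_orthogonal_matrix_mult[OF chart(3), of "y - x0"]
      by (simp_all add: Y_def matrix_vector_mult_diff_distrib)
    have small: "norm (hproj Y) < \<delta>" and "\<bar>Y $ lastidx\<bar> < h"
      using norm_hproj_le[of Y] component_le_norm_cart[of Y lastidx] nY y(2) by linarith+
    then have "Y \<in> cyl \<rho> h"
      using \<open>\<delta> \<le> \<rho>\<close> by (simp add: cyl_def)
    then have "Y $ lastidx = \<phi> (hproj Y)"
      using is_chartD(8)[OF ch] y(1) unfolding Y_def by blast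
    also have "\<bar>\<phi> (hproj Y)\<bar> \<le> (norm (hproj Y))\<^sup>2 / (2 * r')"
      using graph_quadratic_bound[OF der chart(6) \<open>\<delta> \<le> \<rho>\<close> r'(1) bound hproj_simps(1) small] .
    also have "\<dots> \<le> (norm (y - x0))\<^sup>2 / (2 * r')"
      using norm_hproj_le[of Y] nY r'(1) by (simp add: divide_right_mono power_mono)
    finally show ?thesis
      unfolding n0 inner_commute[of "y - x0"] inner_transpose_mult AY by (simp add: inner_axis')
  qed
  moreover have "min \<delta> h > 0"
    using \<open>0 < \<delta>\<close> chart(2) by simp
  ultimately show ?thesis
    by blast
qed

lemma frontier_closure_subset: "frontier (closure S) \<subseteq> frontier S"
proof -
  have "closure (- closure S) \<subseteq> closure (- S)"
    using closure_subset by (intro closure_mono) blast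
  then show ?thesis
    unfolding frontier_closures by auto
qed

theorem lemma4p3:
  fixes \<Omega> :: "(real^('n::{finite,linorder})) set" and r :: real
  assumes "open \<Omega>" and "connected \<Omega>" and "r > 0" and "cond_L r \<Omega>"
  shows "cond_S r \<Omega>"
  unfolding cond_S_def
proof
  fix x0 assume x0: "x0 \<in> frontier \<Omega>"
  have C1: "C1_boundary \<Omega>"
    and lip: "\<And>x y. x \<in> frontier \<Omega> \<Longrightarrow> y \<in> frontier \<Omega> \<Longrightarrow>
               norm (outward_normal \<Omega> x - outward_normal \<Omega> y) \<le> (1 / r) * dist x y"
    using assms(4) unfolding cond_L_def by auto
  note normal = outer_normal_at_outward_normal[OF C1]
  note unit = norm_outward_normal[OF C1]
  note flat = frontier_flat_near[OF assms(4) x0]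
  have "ball (x0 - r *\<^sub>R outward_normal \<Omega> x0) r \<subseteq> \<Omega>"
    using tangent_ball_subset[OF frontier_closed order_refl x0 \<open>r > 0\<close> normal(1) unit lip flat] .
  moreover have "ball (x0 - r *\<^sub>R (- outward_normal \<Omega> x0)) r \<subseteq> - closure \<Omega>"
  proof (rule tangent_ball_subset[where \<nu> = "\<lambda>y. - outward_normal \<Omega> y", OF frontier_closed _ x0 \<open>r > 0\<close>])
    show "frontier (- closure \<Omega>) \<subseteq> frontier \<Omega>"
      using frontier_closure_subset by (simp add: frontier_complement)
    show "outer_normal_at (- closure \<Omega>) y (- outward_normal \<Omega> y)" if "y \<in> frontier \<Omega>" for y
      using normal(2)[OF that] by (simp add: outer_normal_at_Compl)
  qed (use unit lip flat in \<open>simp_all add: norm_minus_commute\<close>)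
  moreover have "dist x0 (x0 - r *\<^sub>R outward_normal \<Omega> x0) = r"
    and "dist x0 (x0 - r *\<^sub>R (- outward_normal \<Omega> x0)) = r"
    using unit[OF x0] \<open>r > 0\<close> by (simp_all add: dist_norm)
  ultimately show "\<exists>a b. ball a r \<subseteq> \<Omega> \<and> ball b r \<subseteq> - closure \<Omega> \<and> dist x0 a = r \<and> dist x0 b = r"
    by blast
qed

end
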